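(* Let $G$ be a finite abelian group with a free Brauer action on the Brauer graph $(\Gamma,\mathfrak o,m)$, with Brauer orbit graph $(\overline\Gamma,\overline{\mathfrak o},\overline m)$, and let $W:\mathcal Z_{\overline\Gamma}\to G$ be the successor weighting associated to the action. Suppose $i\in\Gamma_1$ is incident with $\mu\in\Gamma_0$ and that, for some $g\in G$, $k=\operatorname{val}(\bar\mu)$ and $s\ge 0$, the successor sequence of $i$ at $\mu$ is $i=i_1,i_2,\dots,i_k,i_1^g,\dots,i_k^g,\dots,i_1^{g^s},\dots,i_k^{g^s}$ with all $\operatorname{val}(\mu)=k(s+1)$ entries listed. Then: (1) $g=\omega_{\bar\mu}=W(\overline{i_1},\overline{i_2})W(\overline{i_2},\overline{i_3})\cdots W(\overline{i_k},\overline{i_{k+1}})$, where $\overline{i_{k+1}}=\overline{i_1}$; (2) $\operatorname{ord}(\bar\mu)=s+1$; (3) $\operatorname{ord}(\bar\mu)$ divides $\overline m(\bar\mu)$; in particular $W$ is a Brauer weighting of $(\overline\Gamma,\overline{\mathfrak o},\overline m)$; (4) for $h,h'\in G$, $\mu^h=\mu^{h'}$ if and only if $h(h')^{-1}\in H_{\bar\mu}=\langle\omega_{\bar\mu}\rangle$; (5) the index of $H_{\bar\mu}$ in $G$ equals the number of vertices in the $G$-orbit of $\mu$.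
   Context: Brauer graphs. A Brauer graph $(\Gamma,\mathfrak o,m)$ is a finite connected graph $\Gamma$ (loops and multiple edges allowed) with vertex set $\Gamma_0$, edge set $\Gamma_1$ and at least one edge, together with a multiplicity function $m:\Gamma_0\to\mathbb Z_{\ge 1}$ and, for each vertex $\mu$, a cyclic ordering $\mathfrak o$ of the edges incident with $\mu$. A loop at $\mu$ occurs twice in the cyclic ordering at $\mu$; its two occurrences are regarded as two distinct elements of $\Gamma_1$ (each with its own successor). Edge $j$ is the successor of edge $i$ at $\mu$ if $j$ immediately follows $i$ in the cyclic ordering at $\mu$. The valency $\operatorname{val}(\mu)$ is the number of edges incident with $\mu$, loops counted twice; if $\operatorname{val}(\mu)=1$ the unique edge at $\mu$ is its own successor. For $i$ incident with $\mu$, the successor sequence of $i$ at $\mu$ is $i=i_1,i_2,\dots,i_{\operatorname{val}(\mu)}$, where $i_{r+1}$ is the successor of $i_r$ at $\mu$ (and $i_{\operatorname{val}(\mu)+1}=i_1$). Brauer actions. Let $G$ be a finite abelian group. A Brauer action of $G$ on $(\Gamma,\mathfrak o,m)$ is a faithful action $x\mapsto x^g$ of $G$ on the graph $\Gamma$ (on vertices and edges, compatible with incidence) such that for all $g\in G$: if $j$ is the successor of $i$ at $\mu$ then $j^g$ is the successor of $i^g$ at $\mu^g$, and $m(\mu^g)=m(\mu)$. It is a free Brauer action if $G$ acts freely on $\Gamma_1$. For a free Brauer action, the Brauer orbit graph $(\overline\Gamma,\overline{\mathfrak o},\overline m)$ has as vertices the $G$-orbits $\bar\mu$ of vertices and as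 edges the $G$-orbits $\bar i$ of edges, $\bar i$ being incident with $\bar\mu$ when $i$ is incident with $\mu$; its cyclic ordering is given by: $\bar j$ is the successor of $\bar i$ at $\bar\mu$ whenever $j$ is the successor of $i$ at $\mu$; and $\overline m(\bar\mu)=\operatorname{val}(\mu)m(\mu)/\operatorname{val}(\bar\mu)$. Successor weightings. For a Brauer graph $(\Delta,\mathfrak o,m)$ and $\mu\in\Delta_0$ let $\mathcal Z_\mu$ be the set of pairs $(i,j)$ of edges with $j$ the successor of $i$ at $\mu$, and $\mathcal Z_\Delta=\bigsqcup_{\mu\in\Delta_0}\mathcal Z_\mu$ (disjoint union). A successor weighting is a function $W:\mathcal Z_\Delta\to G$. Put $\omega_\mu=\prod_{(i,j)\in\mathcal Z_\mu}W(i,j)$, let $\operatorname{ord}(\mu)$ be the order of $\omega_\mu$ in $G$, and $H_\mu=\langle\omega_\mu\rangle$. $W$ is a Brauer weighting if $\operatorname{ord}(\mu)$ divides $m(\mu)$ for all $\mu\in\Delta_0$. Successor weighting associated to a free Brauer action. For each edge $\bar i$ of $\overline\Gamma$ fix a representative $i_*\in\bar i$, and for each endpoint $\bar\mu$ of $\bar i$ fix $\mu_*\in\bar\mu$ incident with $i_*$. For $(\bar i,\bar j)\in\mathcal Z_{\bar\mu}$, there is a unique edge $l\in\bar j$ that is the successor of $i_*$ at $\mu_*$, and $l=(j_* )^g$ for a unique $g\in G$; set $W(\bar i,\bar j)=g$. This defines $W:\mathcal Z_{\overline\Gamma}\to G$. *)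

theory Defs
  imports "HOL-Algebra.Algebra" "HOL-Algebra.Multiplicative_Group"
begin

(* Brauer graphs in "dart" (edge-occurrence) form.
   D    : the edge occurrences (darts); a dart is an edge together with one of its ends,
          so a loop contributes two distinct darts at its vertex, a non-loop edge one
          dart at each endpoint.
   edge d : the edge of which d is an occurrence;  vert d : the vertex at which d sits.
   nxt d  : the occurrence following d in the cyclic ordering at vert d.
   m      : multiplicity function. *)

definition adj_rel :: "'d set \<Rightarrow> ('d \<Rightarrow> 'e) \<Rightarrow> ('d \<Rightarrow> 'v) \<Rightarrow> ('v \<times> 'v) set" where
  "adj_rel D edge vert =
     {(vert d, vert d') | d d'. d \<in> D \<and> d' \<in> D \<and> edge d = edge d'}"

definition brauer_graph ::
  "'v set \<Rightarrow> 'e set \<Rightarrow> 'd set \<Rightarrow> ('d \<Rightarrow> 'e) \<Rightarrow> ('d \<Rightarrow> 'v) \<Rightarrow> ('d \<Rightarrow> 'd)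
   \<Rightarrow> ('v \<Rightarrow> nat) \<Rightarrow> bool" where
  "brauer_graph V E D edge vert nxt m \<longleftrightarrow>
     finite D \<and> E \<noteq> {} \<and> edge ` D = E \<and> vert ` D = V
     \<and> (\<forall>e\<in>E. card {d\<in>D. edge d = e} = 2)
     \<and> bij_betw nxt D D
     \<and> (\<forall>d\<in>D. vert (nxt d) = vert d)
     \<and> (\<forall>d\<in>D. \<forall>d'\<in>D. vert d' = vert d \<longrightarrow> (\<exists>n. (nxt ^^ n) d = d'))
     \<and> (\<forall>v\<in>V. m v \<ge> 1)
     \<and> (\<forall>u\<in>V. \<forall>w\<in>V. (u, w) \<in> (adj_rel D edge vert)\<^sup>*)"

(* valency: number of edge occurrences at v (loops counted twice) *)
definition val :: "'d set \<Rightarrow> ('d \<Rightarrow> 'v) \<Rightarrow> 'v \<Rightarrow> nat" where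
  "val D vert v = card {d\<in>D. vert d = v}"

definition is_action :: "('g, 'b) monoid_scheme \<Rightarrow> 'x set \<Rightarrow> ('g \<Rightarrow> 'x \<Rightarrow> 'x) \<Rightarrow> bool" where
  "is_action G Sx act \<longleftrightarrow>
     (\<forall>g\<in>carrier G. \<forall>x\<in>Sx. act g x \<in> Sx)
     \<and> (\<forall>x\<in>Sx. act (monoid.one G) x = x)
     \<and> (\<forall>g\<in>carrier G. \<forall>h\<in>carrier G. \<forall>x\<in>Sx. act (monoid.mult G g h) x = act g (act h x))"

definition free_brauer_action ::
  "('g, 'b) monoid_scheme \<Rightarrow> 'v set \<Rightarrow> 'e set \<Rightarrow> 'd set \<Rightarrow> ('d \<Rightarrow> 'e) \<Rightarrow> ('d \<Rightarrow> 'v)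
   \<Rightarrow> ('d \<Rightarrow> 'd) \<Rightarrow> ('v \<Rightarrow> nat)
   \<Rightarrow> ('g \<Rightarrow> 'd \<Rightarrow> 'd) \<Rightarrow> ('g \<Rightarrow> 'v \<Rightarrow> 'v) \<Rightarrow> ('g \<Rightarrow> 'e \<Rightarrow> 'e) \<Rightarrow> bool" where
  "free_brauer_action G V E D edge vert nxt m act actV actE \<longleftrightarrow>
     is_action G D act \<and> is_action G V actV \<and> is_action G E actE
     \<and> (\<forall>g\<in>carrier G. \<forall>d\<in>D. edge (act g d) = actE g (edge d))
     \<and> (\<forall>g\<in>carrier G. \<forall>d\<in>D. vert (act g d) = actV g (vert d))
     \<and> (\<forall>g\<in>carrier G. \<forall>d\<in>D. nxt (act g d) = act g (nxt d))
     \<and> (\<forall>g\<in>carrier G. \<forall>v\<in>V. m (actV g v) = m v)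
     \<and> (\<forall>g\<in>carrier G. (\<forall>v\<in>V. actV g v = v) \<and> (\<forall>e\<in>E. actE g e = e)
            \<and> (\<forall>d\<in>D. act g d = d) \<longrightarrow> g = (monoid.one G))
     \<and> (\<forall>g\<in>carrier G. \<forall>e\<in>E. actE g e = e \<longrightarrow> g = (monoid.one G))"

definition orb :: "('g, 'b) monoid_scheme \<Rightarrow> ('g \<Rightarrow> 'x \<Rightarrow> 'x) \<Rightarrow> 'x \<Rightarrow> 'x set" where
  "orb G act x = (\<lambda>g. act g x) ` carrier G"

(* Brauer orbit graph: the edge occurrences at the orbit vertex vb are the G-orbits of
   darts lying over vb; these index Z_vb (each occurrence paired with its successor). *)
definition orb_darts_at ::
  "('g, 'b) monoid_scheme \<Rightarrow> 'd set \<Rightarrow> ('d \<Rightarrow> 'v) \<Rightarrow> ('g \<Rightarrow> 'd \<Rightarrow> 'd)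
   \<Rightarrow> ('g \<Rightarrow> 'v \<Rightarrow> 'v) \<Rightarrow> 'v set \<Rightarrow> 'd set set" where
  "orb_darts_at G D vert act actV vb = {orb G act d | d. d \<in> D \<and> orb G actV (vert d) = vb}"

definition val_bar ::
  "('g, 'b) monoid_scheme \<Rightarrow> 'd set \<Rightarrow> ('d \<Rightarrow> 'v) \<Rightarrow> ('g \<Rightarrow> 'd \<Rightarrow> 'd)
   \<Rightarrow> ('g \<Rightarrow> 'v \<Rightarrow> 'v) \<Rightarrow> 'v set \<Rightarrow> nat" where
  "val_bar G D vert act actV vb = card (orb_darts_at G D vert act actV vb)"

definition m_bar ::
  "('g, 'b) monoid_scheme \<Rightarrow> 'd set \<Rightarrow> ('d \<Rightarrow> 'v) \<Rightarrow> ('v \<Rightarrow> nat) \<Rightarrow> ('g \<Rightarrow> 'd \<Rightarrow> 'd)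
   \<Rightarrow> ('g \<Rightarrow> 'v \<Rightarrow> 'v) \<Rightarrow> 'v set \<Rightarrow> nat" where
  "m_bar G D vert m act actV vb =
     (let mu = (SOME mu. mu \<in> vb) in val D vert mu * m mu div val_bar G D vert act actV vb)"

(* Representatives: erep chooses a representative edge i_* in each edge orbit.  The
   representative of an occurrence-orbit delta (an occurrence of the orbit edge at an
   orbit vertex) is the unique occurrence of the representative edge lying in delta,
   i.e. the occurrence of i_* at the chosen mu_*. *)
definition rep_dart ::
  "('g, 'b) monoid_scheme \<Rightarrow> ('d \<Rightarrow> 'e) \<Rightarrow> ('g \<Rightarrow> 'e \<Rightarrow> 'e) \<Rightarrow> ('e set \<Rightarrow> 'e)
   \<Rightarrow> 'd set \<Rightarrow> 'd" where
  "rep_dart G edge actE erep delta =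
     (THE x. x \<in> delta \<and> edge x = erep (orb G actE (edge x)))"

definition W ::
  "('g, 'b) monoid_scheme \<Rightarrow> ('d \<Rightarrow> 'e) \<Rightarrow> ('d \<Rightarrow> 'd) \<Rightarrow> ('g \<Rightarrow> 'd \<Rightarrow> 'd)
   \<Rightarrow> ('g \<Rightarrow> 'e \<Rightarrow> 'e) \<Rightarrow> ('e set \<Rightarrow> 'e) \<Rightarrow> 'd set \<Rightarrow> 'g" where
  "W G edge nxt act actE erep delta =
     (THE g. g \<in> carrier G \<and>
        nxt (rep_dart G edge actE erep delta)
          = act g (rep_dart G edge actE erep (orb G act (nxt (rep_dart G edge actE erep delta)))))"

definition omega ::
  "('g, 'b) monoid_scheme \<Rightarrow> 'd set \<Rightarrow> ('d \<Rightarrow> 'e) \<Rightarrow> ('d \<Rightarrow> 'v) \<Rightarrow> ('d \<Rightarrow> 'd)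
   \<Rightarrow> ('g \<Rightarrow> 'd \<Rightarrow> 'd) \<Rightarrow> ('g \<Rightarrow> 'v \<Rightarrow> 'v) \<Rightarrow> ('g \<Rightarrow> 'e \<Rightarrow> 'e) \<Rightarrow> ('e set \<Rightarrow> 'e)
   \<Rightarrow> 'v set \<Rightarrow> 'g" where
  "omega G D edge vert nxt act actV actE erep vb =
     finprod G (W G edge nxt act actE erep) (orb_darts_at G D vert act actV vb)"

definition ord_bar where
  "ord_bar G D edge vert nxt act actV actE erep vb =
     group.ord G (omega G D edge vert nxt act actV actE erep vb)"

definition brauer_weighting where
  "brauer_weighting G V D edge vert nxt m act actV actE erep \<longleftrightarrow>
     (\<forall>vb \<in> orb G actV ` V.
        ord_bar G D edge vert nxt act actV actE erep vb dvd m_bar G D vert m act actV vb)"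

end

theory Submission imports Defs begin

(*
  Fix a dart (edge occurrence) d at the vertex mu = vert d, write
  d_n = nxt^n d for its successor sequence and k = val(mu-bar).  Call a group element g a
  rotation at d if d_k = g d.  The hypotheses of the theorem only serve to provide such a
  rotation at i (its case t = 1 or the final equation); everything then follows from
  d_k = g d alone:
   - every dart at mu has the form d_(qk+r) = g^q d_r with r < k, so the G-orbits of
     d_0, ..., d_(k-1) are exactly the k occurrences of edges at mu-bar;
   - the weight of an occurrence is W(orb x) = c(x) (c(nxt x))^-1, where c(x) is the offset
     of x from the representative of its orbit, and c(g x) = c(x) g^-1; hence the product
     omega over the k occurrences telescopes to c(d) c(g d)^-1 = g;
   - g^n = 1 iff d_(nk) = d iff val(mu) divides nk, so ord g = val(mu)/k, which gives the
     order and the multiplicity statements, and the stabiliser of mu is <g>.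
  Since every dart admits a rotation, the multiplicity statement holds at every orbit vertex,
  i.e. W is a Brauer weighting.
*)

lemma orb_act_eq:
  fixes G (structure)
  assumes "group G" "is_action G S f" "x \<in> S" "a \<in> carrier G"
  shows "orb G f (f a x) = orb G f x"
proof -
  interpret group G by fact
  have comp: "f b (f a x) = f (b \<otimes> a) x" if "b \<in> carrier G" for b
    using assms(2-4) that unfolding is_action_def by auto
  have moved_back: "f b x = f (b \<otimes> inv a) (f a x)" if "b \<in> carrier G" for b
    using comp[of "b \<otimes> inv a"] that assms(4) by (simp add: m_assoc)
  show ?thesis
    unfolding orb_def
  proof (intro equalityI subsetI)
    fix y assume "y \<in> (\<lambda>b. f b (f a x)) ` carrier G"
    then show "y \<in> (\<lambda>b. f b x) ` carrier G" using comp assms(4) by auto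
  next
    fix y assume "y \<in> (\<lambda>b. f b x) ` carrier G"
    then obtain b where "b \<in> carrier G" "y = f b x" by blast
    then show "y \<in> (\<lambda>b. f b (f a x)) ` carrier G" using moved_back assms(4) by blast
  qed
qed

lemma card_image_same_fibres:
  assumes "\<And>x y. x \<in> A \<Longrightarrow> y \<in> A \<Longrightarrow> f x = f y \<longleftrightarrow> g x = g y"
  shows "card (f ` A) = card (g ` A)"
proof -
  let ?P = "(\<lambda>x. (f x, g x)) ` A"
  have "f ` A = fst ` ?P" "g ` A = snd ` ?P" by (auto simp: image_image)
  moreover have "inj_on fst ?P" "inj_on snd ?P" using assms by (auto simp: inj_on_def)
  ultimately show ?thesis by (simp add: card_image)
qed

lemma (in group) card_rcosets_eq_card_orb:
  assumes H: "subgroup H G"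
    and fibres: "\<And>h h'. h \<in> carrier G \<Longrightarrow> h' \<in> carrier G \<Longrightarrow> f h x = f h' x \<longleftrightarrow> h \<otimes> inv h' \<in> H"
  shows "card (rcosets H) = card (orb G f x)"
proof -
  have cosets_eq: "H #> h = H #> h' \<longleftrightarrow> h \<otimes> inv h' \<in> H"
    if "h \<in> carrier G" "h' \<in> carrier G" for h h'
    using that subgroup.rcos_module[OF H is_group] repr_independenceD[OF H]
      repr_independence[OF _ _ H] by metis
  have "rcosets H = (\<lambda>h. H #> h) ` carrier G" unfolding RCOSETS_def by auto
  moreover have "card ((\<lambda>h. H #> h) ` carrier G) = card ((\<lambda>h. f h x) ` carrier G)"
    by (rule card_image_same_fibres) (simp add: cosets_eq fibres)
  ultimately show ?thesis unfolding orb_def by simp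
qed

lemma (in comm_group) finprod_telescope:
  assumes "\<And>r. c r \<in> carrier G"
  shows "finprod G (\<lambda>r. c r \<otimes> inv (c (Suc r))) {..<n} = c 0 \<otimes> inv (c n)"
proof (induction n)
  case (Suc n)
  have "finprod G (\<lambda>r. c r \<otimes> inv (c (Suc r))) {..<Suc n}
      = (c n \<otimes> inv (c (Suc n))) \<otimes> (c 0 \<otimes> inv (c n))"
    unfolding lessThan_Suc using Suc assms by (subst finprod_insert) auto
  also have "\<dots> = c 0 \<otimes> inv (c (Suc n))"
    using assms by (simp add: m_ac) (simp add: m_assoc[symmetric])
  finally show ?case .
qed (use assms in simp)

locale free_brauer_setting =
  fixes G :: "('g, 'b) monoid_scheme" (structure)
    and V :: "'v set" and E :: "'e set" and D :: "'d set"
    and edge :: "'d \<Rightarrow> 'e" and vert :: "'d \<Rightarrow> 'v" and nxt :: "'d \<Rightarrow> 'd"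
    and m :: "'v \<Rightarrow> nat"
    and act :: "'g \<Rightarrow> 'd \<Rightarrow> 'd" and actV :: "'g \<Rightarrow> 'v \<Rightarrow> 'v" and actE :: "'g \<Rightarrow> 'e \<Rightarrow> 'e"
    and erep :: "'e set \<Rightarrow> 'e"
  assumes abelian: "comm_group G" and finite_G: "finite (carrier G)"
    and brauer: "brauer_graph V E D edge vert nxt m"
    and free_action: "free_brauer_action G V E D edge vert nxt m act actV actE"
    and erep_in_orbit: "\<forall>e\<in>E. erep (orb G actE e) \<in> orb G actE e"
begin

sublocale comm_group G by (rule abelian)

lemma action_darts: "is_action G D act"
  and action_vertices: "is_action G V actV"
  and action_edges: "is_action G E actE"
  using free_action unfolding free_brauer_action_def by auto

lemma act_closed: "a \<in> carrier G \<Longrightarrow> x \<in> D \<Longrightarrow> act a x \<in> D"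
  and act_one: "x \<in> D \<Longrightarrow> act \<one> x = x"
  and act_mult: "a \<in> carrier G \<Longrightarrow> b \<in> carrier G \<Longrightarrow> x \<in> D \<Longrightarrow> act (a \<otimes> b) x = act a (act b x)"
  using action_darts unfolding is_action_def by auto

lemma actV_one: "x \<in> V \<Longrightarrow> actV \<one> x = x"
  and actV_mult: "a \<in> carrier G \<Longrightarrow> b \<in> carrier G \<Longrightarrow> x \<in> V \<Longrightarrow> actV (a \<otimes> b) x = actV a (actV b x)"
  using action_vertices unfolding is_action_def by auto

lemma actE_one: "x \<in> E \<Longrightarrow> actE \<one> x = x"
  and actE_mult: "a \<in> carrier G \<Longrightarrow> b \<in> carrier G \<Longrightarrow> x \<in> E \<Longrightarrow> actE (a \<otimes> b) x = actE a (actE b x)"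
  using action_edges unfolding is_action_def by auto

lemma edge_act: "a \<in> carrier G \<Longrightarrow> x \<in> D \<Longrightarrow> edge (act a x) = actE a (edge x)"
  and vert_act: "a \<in> carrier G \<Longrightarrow> x \<in> D \<Longrightarrow> vert (act a x) = actV a (vert x)"
  and nxt_act: "a \<in> carrier G \<Longrightarrow> x \<in> D \<Longrightarrow> nxt (act a x) = act a (nxt x)"
  and m_act: "a \<in> carrier G \<Longrightarrow> v \<in> V \<Longrightarrow> m (actV a v) = m v"
  and free_on_edges: "a \<in> carrier G \<Longrightarrow> e \<in> E \<Longrightarrow> actE a e = e \<Longrightarrow> a = \<one>"
  using free_action unfolding free_brauer_action_def by auto

lemma finite_D: "finite D"
  and edge_in: "x \<in> D \<Longrightarrow> edge x \<in> E"
  and V_eq: "V = vert ` D"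
  and nxt_bij: "bij_betw nxt D D"
  and nxt_vert: "x \<in> D \<Longrightarrow> vert (nxt x) = vert x"
  and nxt_transitive: "x \<in> D \<Longrightarrow> y \<in> D \<Longrightarrow> vert y = vert x \<Longrightarrow> \<exists>n. (nxt ^^ n) x = y"
  using brauer unfolding brauer_graph_def by auto

lemma vert_in: "x \<in> D \<Longrightarrow> vert x \<in> V"
  using V_eq by blast

lemma nxt_in: "x \<in> D \<Longrightarrow> nxt x \<in> D"
  using nxt_bij by (meson bij_betwE)

lemma nxtn_in: "x \<in> D \<Longrightarrow> (nxt ^^ n) x \<in> D"
  by (induction n) (auto simp: nxt_in)

lemma nxtn_vert: "x \<in> D \<Longrightarrow> vert ((nxt ^^ n) x) = vert x"
  by (induction n) (auto simp: nxt_vert nxtn_in)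

lemma nxtn_act: "a \<in> carrier G \<Longrightarrow> x \<in> D \<Longrightarrow> (nxt ^^ n) (act a x) = act a ((nxt ^^ n) x)"
  by (induction n) (auto simp: nxt_act nxtn_in)

lemma nxtn_inj: "inj_on (nxt ^^ n) D"
  using bij_betw_funpow[OF nxt_bij] bij_betw_def by blast

lemma act_inv: "a \<in> carrier G \<Longrightarrow> x \<in> D \<Longrightarrow> act (inv a) (act a x) = x"
  by (metis act_mult act_one inv_closed l_inv)

lemma act_shift: "a \<in> carrier G \<Longrightarrow> c \<in> carrier G \<Longrightarrow> x \<in> D \<Longrightarrow> act (c \<otimes> inv a) (act a x) = act c x"
  by (metis act_closed act_inv act_mult inv_closed)

lemma actV_inv: "a \<in> carrier G \<Longrightarrow> x \<in> V \<Longrightarrow> actV (inv a) (actV a x) = x"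
  by (metis actV_mult actV_one inv_closed l_inv)

lemma actE_cancel:
  assumes "e \<in> E" "a \<in> carrier G" "b \<in> carrier G" "actE a e = actE b e"
  shows "a = b"
proof -
  have "actE (inv b \<otimes> a) e = e"
    using assms by (metis actE_mult actE_one inv_closed l_inv)
  then have "inv b \<otimes> a = \<one>" using assms by (meson free_on_edges inv_closed m_closed)
  then show ?thesis using assms by (metis inv_closed inv_inv local.inv_equality)
qed

lemma act_cancel:
  assumes "x \<in> D" "a \<in> carrier G" "b \<in> carrier G" "act a x = act b x"
  shows "a = b"
  using assms actE_cancel[OF edge_in[OF assms(1)] assms(2,3)] by (metis edge_act)

lemma act_fix: "x \<in> D \<Longrightarrow> a \<in> carrier G \<Longrightarrow> act a x = x \<longleftrightarrow> a = \<one>"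
  using act_cancel[of x a \<one>] act_one by auto

lemma orb_act: "a \<in> carrier G \<Longrightarrow> x \<in> D \<Longrightarrow> orb G act (act a x) = orb G act x"
  by (rule orb_act_eq[OF is_group action_darts])

lemma orbE_act: "a \<in> carrier G \<Longrightarrow> x \<in> E \<Longrightarrow> orb G actE (actE a x) = orb G actE x"
  by (rule orb_act_eq[OF is_group action_edges])

lemma in_orbD: "y \<in> orb G act x \<Longrightarrow> \<exists>a\<in>carrier G. y = act a x"
  unfolding orb_def by blast

lemma self_in_orb: "x \<in> D \<Longrightarrow> x \<in> orb G act x"
  unfolding orb_def using act_one by (metis image_eqI one_closed)

lemma self_in_orbV: "x \<in> V \<Longrightarrow> x \<in> orb G actV x"
  unfolding orb_def using actV_one by (metis image_eqI one_closed)

subsection \<open>The successor cycle at a vertex\<close>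

lemma successor_cycle:
  assumes d: "d \<in> D"
  shows "0 < val D vert (vert d)" and "(nxt ^^ val D vert (vert d)) d = d"
    and "inj_on (\<lambda>n. (nxt ^^ n) d) {..<val D vert (vert d)}"
    and "{x\<in>D. vert x = vert d} = (\<lambda>n. (nxt ^^ n) d) ` {..<val D vert (vert d)}"
proof -
  obtain n where "(nxt ^^ n) (nxt d) = d"
    using nxt_transitive[of "nxt d" d] d nxt_in nxt_vert by auto
  then have returns: "(nxt ^^ Suc n) d = d" by (simp add: funpow_swap1)
  define p where "p = (LEAST n. 0 < n \<and> (nxt ^^ n) d = d)"
  have p: "0 < p" "(nxt ^^ p) d = d"
    using LeastI[of "\<lambda>n. 0 < n \<and> (nxt ^^ n) d = d" "Suc n"] returns unfolding p_def by auto
  have no_early_return: "(nxt ^^ n) d \<noteq> d" if "0 < n" "n < p" for n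
    using not_less_Least[of n "\<lambda>n. 0 < n \<and> (nxt ^^ n) d = d"] that unfolding p_def by blast
  have distinct: "(nxt ^^ a) d \<noteq> (nxt ^^ b) d" if "a < b" "b < p" for a b
  proof
    assume eq: "(nxt ^^ a) d = (nxt ^^ b) d"
    have "(nxt ^^ b) d = (nxt ^^ (a + (b - a))) d" using that by simp
    also have "\<dots> = (nxt ^^ a) ((nxt ^^ (b - a)) d)" by (simp only: funpow_add comp_apply)
    finally have "(nxt ^^ (b - a)) d = d"
      using eq inj_onD[OF nxtn_inj] d nxtn_in by metis
    then show False using no_early_return[of "b - a"] that by auto
  qed
  have inj: "inj_on (\<lambda>n. (nxt ^^ n) d) {..<p}"
    unfolding inj_on_def by (metis distinct lessThan_iff linorder_neqE_nat)
  have darts: "{x\<in>D. vert x = vert d} = (\<lambda>n. (nxt ^^ n) d) ` {..<p}"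
  proof (intro equalityI subsetI)
    fix x assume "x \<in> {x\<in>D. vert x = vert d}"
    then obtain j where "(nxt ^^ j) d = x" using nxt_transitive[of d x] d by auto
    moreover have "(nxt ^^ (j mod p)) d = (nxt ^^ j) d" by (rule funpow_mod_eq[OF p(2)])
    ultimately show "x \<in> (\<lambda>n. (nxt ^^ n) d) ` {..<p}"
      using p(1) by (metis image_eqI lessThan_iff mod_less_divisor)
  qed (use d nxtn_in nxtn_vert in auto)
  have "val D vert (vert d) = p"
    unfolding val_def darts using inj by (simp add: card_image)
  then show "0 < val D vert (vert d)" "(nxt ^^ val D vert (vert d)) d = d"
    "inj_on (\<lambda>n. (nxt ^^ n) d) {..<val D vert (vert d)}"
    "{x\<in>D. vert x = vert d} = (\<lambda>n. (nxt ^^ n) d) ` {..<val D vert (vert d)}"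
    using p inj darts by auto
qed

lemma nxtn_eq_self_iff:
  assumes d: "d \<in> D"
  shows "(nxt ^^ n) d = d \<longleftrightarrow> val D vert (vert d) dvd n"
proof -
  let ?p = "val D vert (vert d)"
  note cycle = successor_cycle[OF d]
  have "(nxt ^^ n) d = (nxt ^^ (n mod ?p)) d" using funpow_mod_eq cycle(2) by metis
  moreover have "(nxt ^^ (n mod ?p)) d = (nxt ^^ 0) d \<longleftrightarrow> n mod ?p = 0"
    using inj_onD[OF cycle(3), of "n mod ?p" 0] cycle(1) by auto
  ultimately show ?thesis by (simp add: dvd_eq_mod_eq_0)
qed

subsection \<open>Offsets and weights\<close>

abbreviation rep :: "'d set \<Rightarrow> 'd" where
  "rep \<equiv> rep_dart G edge actE erep"

lemma rep_dart_exists: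
  assumes d: "d \<in> D"
  shows "\<exists>a\<in>carrier G. rep (orb G act d) = act a d"
proof -
  let ?e = "edge d"
  have e: "?e \<in> E" using d edge_in by auto
  then obtain h where h: "h \<in> carrier G" "erep (orb G actE ?e) = actE h ?e"
    using erep_in_orbit unfolding orb_def by blast
  have edge_orbit: "edge (act b d) = actE b ?e" "orb G actE (actE b ?e) = orb G actE ?e"
    if "b \<in> carrier G" for b
    using that d e edge_act orbE_act by auto
  let ?P = "\<lambda>x. x \<in> orb G act d \<and> edge x = erep (orb G actE (edge x))"
  have "edge (act h d) = actE h ?e" using edge_orbit(1)[OF h(1)] .
  also have "\<dots> = erep (orb G actE ?e)" using h(2) by simp
  also have "\<dots> = erep (orb G actE (edge (act h d)))" using edge_orbit[OF h(1)] by simp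
  finally have "?P (act h d)" using h(1) unfolding orb_def by blast
  moreover have "y = act h d" if P: "?P y" for y
  proof -
    obtain b where b: "b \<in> carrier G" "y = act b d" using P in_orbD by blast
    have "actE b ?e = edge y" using edge_orbit(1)[OF b(1)] b(2) by simp
    also have "\<dots> = erep (orb G actE (edge y))" using P by simp
    also have "\<dots> = erep (orb G actE ?e)" using edge_orbit[OF b(1)] b(2) by simp
    also have "\<dots> = actE h ?e" by (rule h(2))
    finally show ?thesis using actE_cancel[OF e b(1) h(1)] b(2) by simp
  qed
  ultimately have "rep (orb G act d) = act h d"
    unfolding rep_dart_def by (rule the_equality)
  then show ?thesis using h by auto
qed

text \<open>The offset of a dart x is the group element carrying x to the representative of its
  orbit; by freeness it is unique.\<close>

definition offset :: "'d \<Rightarrow> 'g" where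
  "offset x = (THE a. a \<in> carrier G \<and> rep (orb G act x) = act a x)"

lemma offset_unique:
  assumes "d \<in> D" "a \<in> carrier G" "rep (orb G act d) = act a d"
  shows "offset d = a"
  unfolding offset_def using assms act_cancel by (intro the_equality) metis+

lemma offset:
  assumes "d \<in> D"
  shows "offset d \<in> carrier G" and "rep (orb G act d) = act (offset d) d"
  using rep_dart_exists[OF assms] offset_unique[OF assms] by auto

lemma offset_act:
  assumes a: "a \<in> carrier G" and d: "d \<in> D"
  shows "offset (act a d) = offset d \<otimes> inv a"
proof (rule offset_unique)
  have "rep (orb G act (act a d)) = act (offset d) d"
    using orb_act[OF a d] offset[OF d] by simp
  also have "\<dots> = act (offset d \<otimes> inv a) (act a d)"
    using a d offset(1)[OF d] by (simp add: act_shift)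
  finally show "rep (orb G act (act a d)) = act (offset d \<otimes> inv a) (act a d)" .
qed (use a d offset act_closed in auto)

lemma weight_offset:
  assumes d: "d \<in> D"
  shows "W G edge nxt act actE erep (orb G act d) = offset d \<otimes> inv (offset (nxt d))"
proof -
  let ?c = "offset d" and ?c' = "offset (nxt d)"
  have c: "?c \<in> carrier G" "?c' \<in> carrier G" using offset(1) d nxt_in by auto
  have nxt_rep: "nxt (rep (orb G act d)) = act ?c (nxt d)"
    using offset(2)[OF d] c d nxt_act by simp
  have rep_nxt: "rep (orb G act (act ?c (nxt d))) = act ?c' (nxt d)"
    using orb_act c d nxt_in offset(2) by simp
  have "nxt (rep (orb G act d)) = act (?c \<otimes> inv ?c') (rep (orb G act (nxt (rep (orb G act d)))))"
    unfolding nxt_rep rep_nxt using c d nxt_in by (simp add: act_shift)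
  moreover have "act ?c' (nxt d) \<in> D" using c d nxt_in act_closed by auto
  ultimately show ?thesis
    unfolding W_def nxt_rep rep_nxt using c act_cancel by (intro the_equality) auto
qed

lemma weight_closed: "d \<in> D \<Longrightarrow> W G edge nxt act actE erep (orb G act d) \<in> carrier G"
  using weight_offset offset(1) nxt_in by simp

text \<open>Moving a vertex by the group does not change its valency: the darts at v are carried
  injectively into the darts at h v, and back by h^-1.\<close>

lemma val_act_le:
  assumes h: "h \<in> carrier G"
  shows "val D vert v \<le> val D vert (actV h v)"
proof -
  have "inj_on (act h) {x\<in>D. vert x = v}"
  proof (rule inj_onI)
    fix x y assume "x \<in> {x\<in>D. vert x = v}" "y \<in> {x\<in>D. vert x = v}" and eq: "act h x = act h y"
    then have "x \<in> D" "y \<in> D" by auto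
    then show "x = y" using act_inv[OF h, of x] act_inv[OF h, of y] eq by metis
  qed
  then have "val D vert v = card (act h ` {x\<in>D. vert x = v})"
    unfolding val_def by (simp add: card_image)
  also have "\<dots> \<le> card {x\<in>D. vert x = actV h v}"
  proof (rule card_mono)
    show "finite {x\<in>D. vert x = actV h v}" using finite_D by simp
    show "act h ` {x\<in>D. vert x = v} \<subseteq> {x\<in>D. vert x = actV h v}"
      using h act_closed vert_act by auto
  qed
  finally show ?thesis unfolding val_def .
qed

lemma val_act:
  assumes h: "h \<in> carrier G" and v: "v \<in> V"
  shows "val D vert (actV h v) = val D vert v"
proof -
  have "val D vert v = val D vert (actV (inv h) (actV h v))" using h v actV_inv by simp
  also have "\<dots> \<ge> val D vert (actV h v)" using h by (intro val_act_le) simp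
  finally show ?thesis using val_act_le[OF h, of v] by simp
qed

lemma actV_eq_iff:
  assumes h: "h \<in> carrier G" and h': "h' \<in> carrier G" and v: "v \<in> V"
  shows "actV h v = actV h' v \<longleftrightarrow> actV (h \<otimes> inv h') v = v"
proof -
  have quotient: "actV (h \<otimes> inv h') v = actV (inv h') (actV h v)"
    using h h' v m_comm[of h "inv h'"] actV_mult[of "inv h'" h v] by simp
  have "h' \<otimes> (h \<otimes> inv h') = h"
    using h h' by (metis m_lcomm inv_closed r_inv r_one)
  then have "actV h v = actV h' (actV (h \<otimes> inv h') v)"
    using h h' v actV_mult[of h' "h \<otimes> inv h'" v] by simp
  then show ?thesis using quotient h' v actV_inv by metis
qed

subsection \<open>Rotations at a dart\<close>

lemma shift_power:
  assumes d: "d \<in> D" and g: "g \<in> carrier G" and shift: "(nxt ^^ n) d = act g d"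
  shows "(nxt ^^ (q * n + r)) d = act (g [^] q) ((nxt ^^ r) d)"
proof (induction q)
  case 0
  then show ?case using act_one nxtn_in d by simp
next
  case (Suc q)
  have "(nxt ^^ (Suc q * n + r)) d = (nxt ^^ ((q * n + r) + n)) d" by (simp add: algebra_simps)
  also have "\<dots> = (nxt ^^ (q * n + r)) ((nxt ^^ n) d)" by (simp only: funpow_add comp_apply)
  also have "\<dots> = act g (act (g [^] q) ((nxt ^^ r) d))"
    using shift g nxtn_act d Suc by simp
  also have "\<dots> = act (g \<otimes> g [^] q) ((nxt ^^ r) d)"
    using g d nxtn_in by (simp add: act_mult)
  also have "\<dots> = act (g [^] Suc q) ((nxt ^^ r) d)"
    using g by (simp only: nat_pow_Suc2)
  finally show ?case .
qed

lemma dart_orbits_at_shift: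
  assumes d: "d \<in> D" and g: "g \<in> carrier G" and n: "0 < n"
    and shift: "(nxt ^^ n) d = act g d"
  shows "orb_darts_at G D vert act actV (orb G actV (vert d))
           = (\<lambda>r. orb G act ((nxt ^^ r) d)) ` {..<n}"
proof (intro equalityI subsetI)
  fix \<delta> assume "\<delta> \<in> orb_darts_at G D vert act actV (orb G actV (vert d))"
  then obtain e where e: "e \<in> D" "orb G actV (vert e) = orb G actV (vert d)" "\<delta> = orb G act e"
    unfolding orb_darts_at_def by auto
  then have "vert e \<in> orb G actV (vert d)" using self_in_orbV vert_in by metis
  then obtain h where h: "h \<in> carrier G" "vert e = actV h (vert d)" unfolding orb_def by auto
  have "act (inv h) e \<in> {x\<in>D. vert x = vert d}"
    using h e d act_closed vert_act actV_inv vert_in by simp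
  then have "act (inv h) e \<in> (\<lambda>n. (nxt ^^ n) d) ` {..<val D vert (vert d)}"
    using successor_cycle(4)[OF d] by simp
  then obtain j where j: "(nxt ^^ j) d = act (inv h) e" by (metis (no_types, lifting) imageE)
  have "orb G act e = orb G act (act (inv h) e)" using h e orb_act by simp
  also have "\<dots> = orb G act ((nxt ^^ j) d)" using j by simp
  also have "\<dots> = orb G act (act (g [^] (j div n)) ((nxt ^^ (j mod n)) d))"
    using shift_power[OF d g shift, of "j div n" "j mod n"] by simp
  also have "\<dots> = orb G act ((nxt ^^ (j mod n)) d)" using g d nxtn_in orb_act by simp
  finally have "\<delta> = orb G act ((nxt ^^ (j mod n)) d)" using e(3) by simp
  moreover have "j mod n \<in> {..<n}" using n by simp
  ultimately show "\<delta> \<in> (\<lambda>r. orb G act ((nxt ^^ r) d)) ` {..<n}" by (rule image_eqI)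
next
  fix \<delta> assume "\<delta> \<in> (\<lambda>r. orb G act ((nxt ^^ r) d)) ` {..<n}"
  then obtain r where "\<delta> = orb G act ((nxt ^^ r) d)" by blast
  moreover have "(nxt ^^ r) d \<in> D" "vert ((nxt ^^ r) d) = vert d" using d nxtn_in nxtn_vert by auto
  ultimately show "\<delta> \<in> orb_darts_at G D vert act actV (orb G actV (vert d))"
    unfolding orb_darts_at_def by auto
qed

lemma val_bar_pos:
  assumes d: "d \<in> D"
  shows "0 < val_bar G D vert act actV (orb G actV (vert d))"
proof -
  have "orb_darts_at G D vert act actV (orb G actV (vert d)) \<subseteq> orb G act ` D"
    unfolding orb_darts_at_def by blast
  then have "finite (orb_darts_at G D vert act actV (orb G actV (vert d)))"
    using finite_D finite_surj by blast
  moreover have "orb G act d \<in> orb_darts_at G D vert act actV (orb G actV (vert d))"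
    unfolding orb_darts_at_def using d by blast
  ultimately show ?thesis unfolding val_bar_def by (metis card_gt_0_iff empty_iff)
qed

text \<open>The first return of the sequence to the orbit of d happens after exactly
  val(mu-bar) steps, since before that the orbits of d_0, d_1, ... are pairwise distinct.\<close>

lemma rotation_exists:
  assumes d: "d \<in> D"
  shows "\<exists>g\<in>carrier G. (nxt ^^ val_bar G D vert act actV (orb G actV (vert d))) d = act g d"
proof -
  let ?returns = "\<lambda>n. 0 < n \<and> (nxt ^^ n) d \<in> orb G act d"
  define n0 where "n0 = (LEAST n. ?returns n)"
  have "?returns (val D vert (vert d))"
    using successor_cycle(1,2)[OF d] self_in_orb[OF d] by simp
  then have n0: "?returns n0" unfolding n0_def by (rule LeastI)
  have minimal: "(nxt ^^ n) d \<notin> orb G act d" if "0 < n" "n < n0" for n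
    using not_less_Least[of n ?returns] that unfolding n0_def by blast
  obtain g where g: "g \<in> carrier G" "(nxt ^^ n0) d = act g d" using n0 in_orbD by blast
  have distinct: "orb G act ((nxt ^^ a) d) \<noteq> orb G act ((nxt ^^ b) d)" if "a < b" "b < n0" for a b
  proof
    assume "orb G act ((nxt ^^ a) d) = orb G act ((nxt ^^ b) d)"
    then have "(nxt ^^ b) d \<in> orb G act ((nxt ^^ a) d)"
      using self_in_orb[OF nxtn_in[OF d, of b]] by simp
    then obtain h where h: "h \<in> carrier G" "(nxt ^^ b) d = act h ((nxt ^^ a) d)"
      using in_orbD by blast
    have "(nxt ^^ a) ((nxt ^^ (b - a)) d) = (nxt ^^ (a + (b - a))) d"
      by (simp only: funpow_add comp_apply)
    also have "\<dots> = (nxt ^^ b) d" using that by simp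
    also have "\<dots> = (nxt ^^ a) (act h d)" using h d nxtn_act by simp
    finally have "(nxt ^^ (b - a)) d = act h d"
      by (rule inj_onD[OF nxtn_inj]) (use d h act_closed nxtn_in in auto)
    moreover have "act h d \<in> orb G act d" using h(1) unfolding orb_def by blast
    moreover have "0 < b - a" "b - a < n0" using that by auto
    ultimately show False using minimal by metis
  qed
  have "inj_on (\<lambda>r. orb G act ((nxt ^^ r) d)) {..<n0}"
    unfolding inj_on_def by (metis distinct lessThan_iff linorder_neqE_nat)
  then have "val_bar G D vert act actV (orb G actV (vert d)) = n0"
    unfolding val_bar_def dart_orbits_at_shift[OF d g(1) conjunct1[OF n0] g(2)]
    by (simp add: card_image)
  then show ?thesis using g by auto
qed

text \<open>A successor sequence listed as in the theorem, i_1, ..., i_k, i_1^g, ..., contains a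
  rotation: its (k+1)-st entry is i^g.\<close>

lemma rotation_from_sequence:
  assumes i: "i \<in> D" and g: "g \<in> carrier G" and k: "0 < k"
    and sequence: "\<forall>t\<le>s. \<forall>r<k. (nxt ^^ (t * k + r)) i = act (g [^] t) ((nxt ^^ r) i)"
    and last: "(nxt ^^ (k * (s + 1))) i = act (g [^] (s + 1)) i"
  shows "(nxt ^^ k) i = act g i"
proof (cases s)
  case 0
  then show ?thesis using g last by simp
next
  case (Suc s')
  have "(nxt ^^ (1 * k + 0)) i = act (g [^] (1::nat)) ((nxt ^^ 0) i)"
    by (rule sequence[rule_format]) (use Suc k in auto)
  then show ?thesis using g by simp
qed

end

section \<open>The orbit vertex of a dart with a rotation\<close>

locale vertex_rotation = free_brauer_setting +
  fixes d and g and k :: nat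
  assumes d_in: "d \<in> D" and g_in: "g \<in> carrier G"
    and k_def: "k = val_bar G D vert act actV (orb G actV (vert d))"
    and rotation: "(nxt ^^ k) d = act g d"
begin

lemma k_pos: "0 < k"
  using val_bar_pos[OF d_in] k_def by simp

lemma rotation_power: "(nxt ^^ (q * k + r)) d = act (g [^] q) ((nxt ^^ r) d)"
  by (rule shift_power[OF d_in g_in rotation])

lemma dart_orbits:
  "orb_darts_at G D vert act actV (orb G actV (vert d)) = (\<lambda>r. orb G act ((nxt ^^ r) d)) ` {..<k}"
  by (rule dart_orbits_at_shift[OF d_in g_in k_pos rotation])

text \<open>Since there are exactly k occurrences at the orbit vertex, the orbits of d_0, ...,
  d_(k-1) are pairwise distinct.\<close>

lemma dart_orbits_inj: "inj_on (\<lambda>r. orb G act ((nxt ^^ r) d)) {..<k}"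
  by (rule eq_card_imp_inj_on) (use dart_orbits k_def in \<open>simp_all add: val_bar_def\<close>)

lemma dart_in_orbit:
  assumes a: "a \<in> carrier G" and eq: "(nxt ^^ n) d = act a d"
  shows "k dvd n" and "a = g [^] (n div k)"
proof -
  let ?q = "n div k" and ?r = "n mod k"
  have split: "(nxt ^^ n) d = act (g [^] ?q) ((nxt ^^ ?r) d)"
    using rotation_power[of ?q ?r] by simp
  have "orb G act ((nxt ^^ ?r) d) = orb G act (act (g [^] ?q) ((nxt ^^ ?r) d))"
    using g_in d_in nxtn_in orb_act by simp
  also have "\<dots> = orb G act (act a d)" using split eq by simp
  also have "\<dots> = orb G act ((nxt ^^ 0) d)" using a d_in orb_act by simp
  finally have r: "?r = 0" using inj_onD[OF dart_orbits_inj] k_pos by simp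
  then show "k dvd n" by (simp add: dvd_eq_mod_eq_0)
  have "act a d = act (g [^] ?q) d" using split eq r by simp
  then show "a = g [^] ?q" using act_cancel d_in a g_in by simp
qed

text \<open>g^n = 1 iff d_(nk) = d iff val(mu) divides nk; hence ord g = val(mu) / k.\<close>

lemma ord_rotation: "group.ord G g * k = val D vert (vert d)"
proof -
  let ?p = "val D vert (vert d)"
  have "(nxt ^^ ?p) d = act \<one> d" using successor_cycle(2)[OF d_in] act_one[OF d_in] by simp
  then have "k dvd ?p" using dart_in_orbit(1)[OF one_closed] by simp
  then obtain c where c: "?p = c * k" by (metis dvd_def mult.commute)
  have "g [^] n = \<one> \<longleftrightarrow> c dvd n" for n
  proof -
    have "g [^] n = \<one> \<longleftrightarrow> act (g [^] n) d = d" using act_fix d_in g_in by simp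
    also have "\<dots> \<longleftrightarrow> (nxt ^^ (n * k)) d = d" using rotation_power[of n 0] by simp
    also have "\<dots> \<longleftrightarrow> c * k dvd n * k" using nxtn_eq_self_iff[OF d_in] c by simp
    also have "\<dots> \<longleftrightarrow> c dvd n" using k_pos by simp
    finally show ?thesis .
  qed
  then have "ord g = c" using ord_unique g_in by blast
  then show ?thesis using c by simp
qed

text \<open>The product of the weights around the orbit vertex telescopes to the rotation.\<close>

lemma omega_rotation:
  shows "omega G D edge vert nxt act actV actE erep (orb G actV (vert d))
           = finprod G (\<lambda>r. W G edge nxt act actE erep (orb G act ((nxt ^^ r) d))) {..<k}"
    and "omega G D edge vert nxt act actV actE erep (orb G actV (vert d)) = g"
proof -
  show as_product: "omega G D edge vert nxt act actV actE erep (orb G actV (vert d))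
           = finprod G (\<lambda>r. W G edge nxt act actE erep (orb G act ((nxt ^^ r) d))) {..<k}"
    unfolding omega_def dart_orbits
    by (rule finprod_reindex) (use weight_closed d_in nxtn_in dart_orbits_inj in auto)
  define c where "c r = offset ((nxt ^^ r) d)" for r
  have c: "c r \<in> carrier G" for r unfolding c_def using offset(1) d_in nxtn_in by simp
  have "W G edge nxt act actE erep (orb G act ((nxt ^^ r) d)) = c r \<otimes> inv (c (Suc r))" for r
    unfolding c_def using weight_offset[OF nxtn_in[OF d_in]] by simp
  then have "omega G D edge vert nxt act actV actE erep (orb G actV (vert d))
      = finprod G (\<lambda>r. c r \<otimes> inv (c (Suc r))) {..<k}"
    unfolding as_product by simp
  also have "\<dots> = c 0 \<otimes> inv (c k)" by (rule finprod_telescope[OF c])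
  also have "\<dots> = c 0 \<otimes> inv (c 0 \<otimes> inv g)"
    using rotation offset_act[OF g_in d_in] unfolding c_def by simp
  also have "\<dots> = g" using c g_in by (simp add: inv_mult m_assoc[symmetric])
  finally show "omega G D edge vert nxt act actV actE erep (orb G actV (vert d)) = g" .
qed

lemma stabiliser_rotation:
  assumes a: "a \<in> carrier G"
  shows "actV a (vert d) = vert d \<longleftrightarrow> a \<in> generate G {g}"
proof -
  have gen: "generate G {g} = {g [^] n | n. n \<in> (UNIV :: nat set)}"
    by (rule generate_pow_on_finite_carrier[OF finite_G g_in])
  have powers_fix: "actV (g [^] n) (vert d) = vert d" for n :: nat
  proof -
    have "actV (g [^] n) (vert d) = vert (act (g [^] n) d)" using vert_act g_in d_in by simp
    also have "\<dots> = vert ((nxt ^^ (n * k)) d)" using rotation_power[of n 0] by simp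
    also have "\<dots> = vert d" using nxtn_vert d_in by simp
    finally show ?thesis .
  qed
  show ?thesis
  proof
    assume "actV a (vert d) = vert d"
    then have "act a d \<in> {x\<in>D. vert x = vert d}" using a d_in act_closed vert_act by simp
    then have "act a d \<in> (\<lambda>n. (nxt ^^ n) d) ` {..<val D vert (vert d)}"
      using successor_cycle(4)[OF d_in] by simp
    then obtain n where "(nxt ^^ n) d = act a d" by (metis (no_types, lifting) imageE)
    then have "a = g [^] (n div k)" using dart_in_orbit(2) a by simp
    then show "a \<in> generate G {g}" unfolding gen by blast
  qed (use gen powers_fix in auto)
qed

lemma stabiliser_cosets:
  assumes "h \<in> carrier G" "h' \<in> carrier G"
  shows "actV h (vert d) = actV h' (vert d) \<longleftrightarrow> h \<otimes> inv h' \<in> generate G {g}"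
  using assms actV_eq_iff stabiliser_rotation vert_in d_in by simp

text \<open>Orbit-stabiliser: the vertices over mu-bar correspond to the cosets of the stabiliser.\<close>

lemma card_cosets_rotation: "card (rcosets (generate G {g})) = card (orb G actV (vert d))"
proof (rule card_rcosets_eq_card_orb)
  show "subgroup (generate G {g}) G" using g_in by (intro generate_is_subgroup) simp
qed (rule stabiliser_cosets)

text \<open>The multiplicity of mu-bar is val(mu) m(mu) / k = ord(g) m(mu).\<close>

lemma m_bar_rotation:
  "m_bar G D vert m act actV (orb G actV (vert d)) = group.ord G g * m (vert d)"
proof -
  let ?vb = "orb G actV (vert d)"
  define mu0 where "mu0 = (SOME mu. mu \<in> ?vb)"
  have "mu0 \<in> ?vb" unfolding mu0_def using self_in_orbV vert_in d_in by (metis someI)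
  then obtain h where h: "h \<in> carrier G" "mu0 = actV h (vert d)" unfolding orb_def by auto
  then have "val D vert mu0 * m mu0 = k * (group.ord G g * m (vert d))"
    using val_act m_act vert_in d_in ord_rotation by (simp add: ac_simps)
  then show ?thesis
    unfolding m_bar_def Let_def mu0_def[symmetric] k_def[symmetric] using k_pos by simp
qed

lemma ord_bar_rotation:
  "ord_bar G D edge vert nxt act actV actE erep (orb G actV (vert d)) = group.ord G g"
  unfolding ord_bar_def omega_rotation(2) ..

lemma ord_bar_dvd_m_bar:
  "ord_bar G D edge vert nxt act actV actE erep (orb G actV (vert d))
     dvd m_bar G D vert m act actV (orb G actV (vert d))"
  unfolding ord_bar_rotation m_bar_rotation by simp

end

lemma (in free_brauer_setting) brauer_weighting_holds:
  "brauer_weighting G V D edge vert nxt m act actV actE erep"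
  unfolding brauer_weighting_def
proof
  fix vb assume "vb \<in> orb G actV ` V"
  then obtain d where d: "d \<in> D" "vb = orb G actV (vert d)" using V_eq by auto
  obtain g where g: "g \<in> carrier G" "(nxt ^^ val_bar G D vert act actV vb) d = act g d"
    using rotation_exists[OF d(1)] d(2) by blast
  interpret rotation: vertex_rotation G V E D edge vert nxt m act actV actE erep d g
      "val_bar G D vert act actV vb"
    by unfold_locales (use d g in auto)
  show "ord_bar G D edge vert nxt act actV actE erep vb dvd m_bar G D vert m act actV vb"
    unfolding d(2) by (rule rotation.ord_bar_dvd_m_bar)
qed

theorem lemma5p1:
  fixes G :: "('g, 'b) monoid_scheme"
    and V :: "'v set" and E :: "'e set" and D :: "'d set"
    and edge :: "'d \<Rightarrow> 'e" and vert :: "'d \<Rightarrow> 'v" and nxt :: "'d \<Rightarrow> 'd"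
    and m :: "'v \<Rightarrow> nat"
    and act :: "'g \<Rightarrow> 'd \<Rightarrow> 'd" and actV :: "'g \<Rightarrow> 'v \<Rightarrow> 'v" and actE :: "'g \<Rightarrow> 'e \<Rightarrow> 'e"
    and erep :: "'e set \<Rightarrow> 'e"
    and i :: 'd and g :: 'g and k s :: nat
  assumes "comm_group G" and "finite (carrier G)"
    and "brauer_graph V E D edge vert nxt m"
    and "free_brauer_action G V E D edge vert nxt m act actV actE"
    and "\<forall>e\<in>E. erep (orb G actE e) \<in> orb G actE e"
    and "i \<in> D" and "g \<in> carrier G"
    and "k = val_bar G D vert act actV (orb G actV (vert i))"
    and "val D vert (vert i) = k * (s + 1)"
    and "\<forall>t\<le>s. \<forall>r<k. (nxt ^^ (t * k + r)) i = act (g [^]\<^bsub>G\<^esub> t) ((nxt ^^ r) i)"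
    and "(nxt ^^ (k * (s + 1))) i = act (g [^]\<^bsub>G\<^esub> (s + 1)) i"
  shows
    "g = omega G D edge vert nxt act actV actE erep (orb G actV (vert i))
     \<and> omega G D edge vert nxt act actV actE erep (orb G actV (vert i))
         = finprod G (\<lambda>r. W G edge nxt act actE erep (orb G act ((nxt ^^ r) i))) {..<k}
     \<and> ord_bar G D edge vert nxt act actV actE erep (orb G actV (vert i)) = s + 1
     \<and> ord_bar G D edge vert nxt act actV actE erep (orb G actV (vert i))
         dvd m_bar G D vert m act actV (orb G actV (vert i))
     \<and> brauer_weighting G V D edge vert nxt m act actV actE erep
     \<and> (\<forall>h\<in>carrier G. \<forall>h'\<in>carrier G.
          actV h (vert i) = actV h' (vert i) \<longleftrightarrow>
          h \<otimes>\<^bsub>G\<^esub> inv\<^bsub>G\<^esub> h'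
            \<in> generate G {omega G D edge vert nxt act actV actE erep (orb G actV (vert i))})
     \<and> card (rcosets\<^bsub>G\<^esub> (generate G {omega G D edge vert nxt act actV actE erep (orb G actV (vert i))}))
         = card (orb G actV (vert i))"
proof -
  interpret free_brauer_setting G V E D edge vert nxt m act actV actE erep
    unfolding free_brauer_setting_def using assms(1-5) by blast
  have k_pos: "0 < k" unfolding assms(8) by (rule val_bar_pos[OF assms(6)])
  have "(nxt ^^ k) i = act g i"
    by (rule rotation_from_sequence[OF assms(6,7) k_pos assms(10,11)])
  then interpret rotation: vertex_rotation G V E D edge vert nxt m act actV actE erep i g k
    using assms(6-8) by unfold_locales
  have "group.ord G g * k = (s + 1) * k"
    using rotation.ord_rotation assms(9) by (simp add: mult.commute)
  then have ord: "group.ord G g = s + 1" using k_pos by (simp only: mult_cancel2) simp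
  have omega: "omega G D edge vert nxt act actV actE erep (orb G actV (vert i)) = g"
    by (rule rotation.omega_rotation(2))
  show ?thesis
    unfolding omega using rotation.omega_rotation(1)[unfolded omega]
      rotation.ord_bar_rotation[unfolded ord] rotation.ord_bar_dvd_m_bar brauer_weighting_holds
      rotation.stabiliser_cosets rotation.card_cosets_rotation by blast
qed

end
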